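(* Let $(\mathbb{X},\dagger)$ be a Moore-Penrose dagger additive category. If $\begin{bmatrix}\alpha&\beta\\ \beta^\dagger&\delta\end{bmatrix}:B\oplus C\to B\oplus C$ is $\dagger$-positive, then $m=\beta^\dagger\circ\alpha^\circ$ is a conditional generator of it, where $\alpha^\circ$ is the Moore-Penrose inverse of $\alpha$.
   Context: A dagger additive category is a dagger category (contravariant identity-on-objects involutive functor $\dagger$) whose hom-sets are abelian groups with bilinear composition and additive $\dagger$, having a zero object and finite biproducts whose projections $\pi_j$ and injections $\iota_j$ satisfy $\pi_j^\dagger=\iota_j$. Maps between biproducts are written as matrices; composition is matrix multiplication and $\dagger$ is transpose with entrywise $\dagger$. An endomorphism $p$ is $\dagger$-positive if $p=\phi^\dagger\circ\phi$ for some map $\phi$. A Moore-Penrose inverse of $f:A\to B$ is a map $f^\circ:B\to A$ with $f f^\circ f=f$, $f^\circ f f^\circ=f^\circ$, $(f f^\circ)^\dagger=f f^\circ$, $(f^\circ f)^\dagger=f^\circ f$ (it is unique when it exists); a Moore-Penrose dagger additive category is one in which every map has a Moore-Penrose inverse. A conditional generator for a $\dagger$-positive map $\begin{bmatrix}\alpha&\beta\\ \beta^\dagger&\delta\end{bmatrix}:B\oplus C\to B\oplus C$ (with $\alpha:B\to B$, $\beta:C\to B$, $\delta:C\to C$) is a map $m:B\to C$ with (i) $m\circ\alpha=\beta^\dagger$ and (ii) $\delta-m\circ\beta$ is $\dagger$-positive. *)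

theory Defs
  imports Main
begin

text \<open>A category presented by objects, arrows, domain/codomain, composition
 (dc_cmp g f = g after f), identities, together with a dagger, abelian group
 structure on hom-sets, a zero object and chosen binary biproducts.
 (Binary biproducts plus a zero object give all finite biproducts.)\<close>

record ('o, 'm) dac =
  dc_Obj :: "'o set"
  dc_Arr :: "'m set"
  dc_dom :: "'m \<Rightarrow> 'o"
  dc_cod :: "'m \<Rightarrow> 'o"
  dc_cmp :: "'m \<Rightarrow> 'm \<Rightarrow> 'm"
  dc_id :: "'o \<Rightarrow> 'm"
  dc_dag :: "'m \<Rightarrow> 'm"
  dc_plus :: "'m \<Rightarrow> 'm \<Rightarrow> 'm"
  dc_neg :: "'m \<Rightarrow> 'm"
  dc_zero :: "'o \<Rightarrow> 'o \<Rightarrow> 'm"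
  dc_zobj :: "'o"
  dc_bip :: "'o \<Rightarrow> 'o \<Rightarrow> 'o"
  dc_prj1 :: "'o \<Rightarrow> 'o \<Rightarrow> 'm"
  dc_prj2 :: "'o \<Rightarrow> 'o \<Rightarrow> 'm"
  dc_inj1 :: "'o \<Rightarrow> 'o \<Rightarrow> 'm"
  dc_inj2 :: "'o \<Rightarrow> 'o \<Rightarrow> 'm"

definition dc_hom :: "('o, 'm, 'z) dac_scheme \<Rightarrow> 'o \<Rightarrow> 'o \<Rightarrow> 'm set" where
  "dc_hom X A B = {f \<in> dc_Arr X. dc_dom X f = A \<and> dc_cod X f = B}"

definition is_category :: "('o, 'm, 'z) dac_scheme \<Rightarrow> bool" where
  "is_category X \<longleftrightarrow>
     (\<forall>f \<in> dc_Arr X. dc_dom X f \<in> dc_Obj X \<and> dc_cod X f \<in> dc_Obj X) \<and>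
     (\<forall>A \<in> dc_Obj X. dc_id X A \<in> dc_hom X A A) \<and>
     (\<forall>A \<in> dc_Obj X. \<forall>B \<in> dc_Obj X. \<forall>C \<in> dc_Obj X. \<forall>f \<in> dc_hom X A B. \<forall>g \<in> dc_hom X B C.
        dc_cmp X g f \<in> dc_hom X A C) \<and>
     (\<forall>A \<in> dc_Obj X. \<forall>B \<in> dc_Obj X. \<forall>C \<in> dc_Obj X. \<forall>D \<in> dc_Obj X.
        \<forall>f \<in> dc_hom X A B. \<forall>g \<in> dc_hom X B C. \<forall>h \<in> dc_hom X C D.
        dc_cmp X h (dc_cmp X g f) = dc_cmp X (dc_cmp X h g) f) \<and>
     (\<forall>A \<in> dc_Obj X. \<forall>B \<in> dc_Obj X. \<forall>f \<in> dc_hom X A B.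
        dc_cmp X (dc_id X B) f = f \<and> dc_cmp X f (dc_id X A) = f)"

definition is_dagger :: "('o, 'm, 'z) dac_scheme \<Rightarrow> bool" where
  "is_dagger X \<longleftrightarrow>
     (\<forall>A \<in> dc_Obj X. \<forall>B \<in> dc_Obj X. \<forall>f \<in> dc_hom X A B.
        dc_dag X f \<in> dc_hom X B A \<and> dc_dag X (dc_dag X f) = f) \<and>
     (\<forall>A \<in> dc_Obj X. dc_dag X (dc_id X A) = dc_id X A) \<and>
     (\<forall>A \<in> dc_Obj X. \<forall>B \<in> dc_Obj X. \<forall>C \<in> dc_Obj X. \<forall>f \<in> dc_hom X A B. \<forall>g \<in> dc_hom X B C.
        dc_dag X (dc_cmp X g f) = dc_cmp X (dc_dag X f) (dc_dag X g))"

definition is_additive_hom :: "('o, 'm, 'z) dac_scheme \<Rightarrow> bool" where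
  "is_additive_hom X \<longleftrightarrow>
     (\<forall>A \<in> dc_Obj X. \<forall>B \<in> dc_Obj X.
        dc_zero X A B \<in> dc_hom X A B \<and>
        (\<forall>f \<in> dc_hom X A B. dc_neg X f \<in> dc_hom X A B \<and>
            dc_plus X f (dc_zero X A B) = f \<and>
            dc_plus X f (dc_neg X f) = dc_zero X A B) \<and>
        (\<forall>f \<in> dc_hom X A B. \<forall>g \<in> dc_hom X A B.
            dc_plus X f g \<in> dc_hom X A B \<and> dc_plus X f g = dc_plus X g f \<and>
            dc_dag X (dc_plus X f g) = dc_plus X (dc_dag X f) (dc_dag X g)) \<and>
        (\<forall>f \<in> dc_hom X A B. \<forall>g \<in> dc_hom X A B. \<forall>h \<in> dc_hom X A B.
            dc_plus X (dc_plus X f g) h = dc_plus X f (dc_plus X g h))) \<and>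
     (\<forall>A \<in> dc_Obj X. \<forall>B \<in> dc_Obj X. \<forall>C \<in> dc_Obj X.
        \<forall>f \<in> dc_hom X A B. \<forall>f' \<in> dc_hom X A B. \<forall>g \<in> dc_hom X B C. \<forall>g' \<in> dc_hom X B C.
          dc_cmp X g (dc_plus X f f') = dc_plus X (dc_cmp X g f) (dc_cmp X g f') \<and>
          dc_cmp X (dc_plus X g g') f = dc_plus X (dc_cmp X g f) (dc_cmp X g' f))"

definition has_zero_object :: "('o, 'm, 'z) dac_scheme \<Rightarrow> bool" where
  "has_zero_object X \<longleftrightarrow> dc_zobj X \<in> dc_Obj X \<and>
     (\<forall>A \<in> dc_Obj X. dc_hom X (dc_zobj X) A = {dc_zero X (dc_zobj X) A} \<and>
                     dc_hom X A (dc_zobj X) = {dc_zero X A (dc_zobj X)})"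

definition has_dagger_biproducts :: "('o, 'm, 'z) dac_scheme \<Rightarrow> bool" where
  "has_dagger_biproducts X \<longleftrightarrow>
     (\<forall>A \<in> dc_Obj X. \<forall>B \<in> dc_Obj X.
        dc_bip X A B \<in> dc_Obj X \<and>
        dc_prj1 X A B \<in> dc_hom X (dc_bip X A B) A \<and>
        dc_prj2 X A B \<in> dc_hom X (dc_bip X A B) B \<and>
        dc_inj1 X A B \<in> dc_hom X A (dc_bip X A B) \<and>
        dc_inj2 X A B \<in> dc_hom X B (dc_bip X A B) \<and>
        dc_cmp X (dc_prj1 X A B) (dc_inj1 X A B) = dc_id X A \<and>
        dc_cmp X (dc_prj2 X A B) (dc_inj2 X A B) = dc_id X B \<and>
        dc_cmp X (dc_prj1 X A B) (dc_inj2 X A B) = dc_zero X B A \<and>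
        dc_cmp X (dc_prj2 X A B) (dc_inj1 X A B) = dc_zero X A B \<and>
        dc_plus X (dc_cmp X (dc_inj1 X A B) (dc_prj1 X A B))
                  (dc_cmp X (dc_inj2 X A B) (dc_prj2 X A B)) = dc_id X (dc_bip X A B) \<and>
        dc_dag X (dc_prj1 X A B) = dc_inj1 X A B \<and>
        dc_dag X (dc_prj2 X A B) = dc_inj2 X A B)"

definition dagger_additive_category :: "('o, 'm, 'z) dac_scheme \<Rightarrow> bool" where
  "dagger_additive_category X \<longleftrightarrow> is_category X \<and> is_dagger X \<and> is_additive_hom X \<and>
     has_zero_object X \<and> has_dagger_biproducts X"

definition dagger_positive :: "('o, 'm, 'z) dac_scheme \<Rightarrow> 'o \<Rightarrow> 'm \<Rightarrow> bool" where
  "dagger_positive X A p \<longleftrightarrow>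
     (\<exists>D \<in> dc_Obj X. \<exists>\<phi> \<in> dc_hom X A D. p = dc_cmp X (dc_dag X \<phi>) \<phi>)"

definition mp_inverse :: "('o, 'm, 'z) dac_scheme \<Rightarrow> 'm \<Rightarrow> 'm \<Rightarrow> bool" where
  "mp_inverse X f g \<longleftrightarrow>
     g \<in> dc_hom X (dc_cod X f) (dc_dom X f) \<and>
     dc_cmp X f (dc_cmp X g f) = f \<and>
     dc_cmp X g (dc_cmp X f g) = g \<and>
     dc_dag X (dc_cmp X f g) = dc_cmp X f g \<and>
     dc_dag X (dc_cmp X g f) = dc_cmp X g f"

definition mp_dagger_additive_category :: "('o, 'm, 'z) dac_scheme \<Rightarrow> bool" where
  "mp_dagger_additive_category X \<longleftrightarrow> dagger_additive_category X \<and>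
     (\<forall>f \<in> dc_Arr X. \<exists>g. mp_inverse X f g)"

text \<open>The 2x2 matrix [[a, b],[c, d]] : B \<oplus> C \<rightarrow> B \<oplus> C with a : B\<rightarrow>B, b : C\<rightarrow>B,
  c : B\<rightarrow>C, d : C\<rightarrow>C, i.e. i1 a p1 + i1 b p2 + i2 c p1 + i2 d p2.\<close>
definition mat2 :: "('o, 'm, 'z) dac_scheme \<Rightarrow> 'o \<Rightarrow> 'o \<Rightarrow> 'm \<Rightarrow> 'm \<Rightarrow> 'm \<Rightarrow> 'm \<Rightarrow> 'm" where
  "mat2 X B C a b c d =
     dc_plus X
       (dc_plus X (dc_cmp X (dc_inj1 X B C) (dc_cmp X a (dc_prj1 X B C)))
                  (dc_cmp X (dc_inj1 X B C) (dc_cmp X b (dc_prj2 X B C))))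
       (dc_plus X (dc_cmp X (dc_inj2 X B C) (dc_cmp X c (dc_prj1 X B C)))
                  (dc_cmp X (dc_inj2 X B C) (dc_cmp X d (dc_prj2 X B C))))"

definition conditional_generator ::
  "('o, 'm, 'z) dac_scheme \<Rightarrow> 'o \<Rightarrow> 'o \<Rightarrow> 'm \<Rightarrow> 'm \<Rightarrow> 'm \<Rightarrow> 'm \<Rightarrow> bool" where
  "conditional_generator X B C \<alpha> \<beta> \<delta> m \<longleftrightarrow>
     m \<in> dc_hom X B C \<and>
     dc_cmp X m \<alpha> = dc_dag X \<beta> \<and>
     dagger_positive X C (dc_plus X \<delta> (dc_neg X (dc_cmp X m \<beta>)))"

end

theory Submission
  imports Defs
begin

(* Write the positive matrix as \<phi>\<^sup>\<dagger> \<phi> with \<phi> : B \<oplus> C \<rightarrow> D and put f = \<phi> \<iota>\<^sub>1, g = \<phi> \<iota>\<^sub>2.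
   Then \<alpha> = f\<^sup>\<dagger> f, \<beta> = f\<^sup>\<dagger> g, \<delta> = g\<^sup>\<dagger> g. If f' is the Moore-Penrose inverse of f, then
   f = f'\<^sup>\<dagger> \<alpha>, so f \<alpha>\<^sup>\<circ> \<alpha> = f and f \<alpha>\<^sup>\<circ> f\<^sup>\<dagger> = f f' =: P, a self-adjoint idempotent.
   Hence m \<alpha> = g\<^sup>\<dagger> f \<alpha>\<^sup>\<circ> \<alpha> = g\<^sup>\<dagger> f = \<beta>\<^sup>\<dagger> and
   \<delta> - m \<beta> = g\<^sup>\<dagger> g - g\<^sup>\<dagger> P g = (g - P g)\<^sup>\<dagger> (g - P g). *)

locale dagger_additive =
  fixes X :: "('o, 'm, 'z) dac_scheme"
  assumes dagger_additive: "dagger_additive_category X"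
begin

abbreviation hom where "hom \<equiv> dc_hom X"
abbreviation cmp (infixr "\<cdot>" 70) where "g \<cdot> f \<equiv> dc_cmp X g f"
abbreviation dag ("_\<^sup>\<dagger>" [1000] 1000) where "f\<^sup>\<dagger> \<equiv> dc_dag X f"
abbreviation add_arr (infixl "\<oplus>" 65) where "f \<oplus> g \<equiv> dc_plus X f g"
abbreviation neg_arr where "neg_arr f \<equiv> dc_neg X f"
abbreviation diff_arr (infixl "\<ominus>" 65) where "f \<ominus> g \<equiv> f \<oplus> neg_arr g"
abbreviation zero_arr where "zero_arr \<equiv> dc_zero X"

lemma category: "is_category X" and dagger: "is_dagger X" and additive: "is_additive_hom X"
  and biproducts: "has_dagger_biproducts X"
  using dagger_additive unfolding dagger_additive_category_def by auto

lemma in_homD: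
  assumes "f \<in> hom A B" shows "A \<in> dc_Obj X" "B \<in> dc_Obj X" "f \<in> dc_Arr X"
  using category assms unfolding is_category_def dc_hom_def by auto

lemma comp_in_hom: assumes f: "f \<in> hom A B" and g: "g \<in> hom B C" shows "g \<cdot> f \<in> hom A C"
  using category in_homD[OF f] in_homD[OF g] f g unfolding is_category_def by blast

lemma comp_assoc:
  assumes f: "f \<in> hom A B" and g: "g \<in> hom B C" and h: "h \<in> hom C D"
  shows "h \<cdot> g \<cdot> f = (h \<cdot> g) \<cdot> f"
proof -
  have "\<forall>A \<in> dc_Obj X. \<forall>B \<in> dc_Obj X. \<forall>C \<in> dc_Obj X. \<forall>D \<in> dc_Obj X.
        \<forall>f \<in> hom A B. \<forall>g \<in> hom B C. \<forall>h \<in> hom C D. h \<cdot> g \<cdot> f = (h \<cdot> g) \<cdot> f"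
    using category unfolding is_category_def by blast
  then show ?thesis using in_homD[OF f] in_homD[OF g] in_homD[OF h] f g h by blast
qed

lemma comp_assoc3:
  assumes "u \<in> hom Y Z" and "x \<in> hom W Y" and "p \<in> hom S W" and "v \<in> hom V S"
  shows "(u \<cdot> x \<cdot> p) \<cdot> v = u \<cdot> x \<cdot> p \<cdot> v"
  using comp_assoc[of v V S "x \<cdot> p" Y u Z] comp_assoc[of v V S p W x] comp_in_hom assms by simp

lemma id_comp: assumes f: "f \<in> hom A B" shows "dc_id X B \<cdot> f = f"
  using category in_homD[OF f] f unfolding is_category_def by blast

lemma comp_id: assumes f: "f \<in> hom A B" shows "f \<cdot> dc_id X A = f"
  using category in_homD[OF f] f unfolding is_category_def by blast

lemma dag_in_hom: assumes f: "f \<in> hom A B" shows "f\<^sup>\<dagger> \<in> hom B A"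
  using dagger in_homD[OF f] f unfolding is_dagger_def by blast

lemma dag_dag: assumes f: "f \<in> hom A B" shows "f\<^sup>\<dagger>\<^sup>\<dagger> = f"
  using dagger in_homD[OF f] f unfolding is_dagger_def by blast

lemma dag_comp: assumes f: "f \<in> hom A B" and g: "g \<in> hom B C" shows "(g \<cdot> f)\<^sup>\<dagger> = f\<^sup>\<dagger> \<cdot> g\<^sup>\<dagger>"
  using dagger in_homD[OF f] in_homD[OF g] f g unfolding is_dagger_def by blast

lemma zero_in_hom: "A \<in> dc_Obj X \<Longrightarrow> B \<in> dc_Obj X \<Longrightarrow> zero_arr A B \<in> hom A B"
  using additive unfolding is_additive_hom_def by blast

lemma neg_in_hom: assumes f: "f \<in> hom A B" shows "neg_arr f \<in> hom A B"
  using additive in_homD[OF f] f unfolding is_additive_hom_def by blast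

lemma add_in_hom: assumes f: "f \<in> hom A B" and g: "g \<in> hom A B" shows "f \<oplus> g \<in> hom A B"
  using additive in_homD[OF f] f g unfolding is_additive_hom_def by blast

lemma diff_in_hom: "f \<in> hom A B \<Longrightarrow> g \<in> hom A B \<Longrightarrow> f \<ominus> g \<in> hom A B"
  by (simp add: add_in_hom neg_in_hom)

lemma add_zero: assumes f: "f \<in> hom A B" shows "f \<oplus> zero_arr A B = f"
  using additive in_homD[OF f] f unfolding is_additive_hom_def by blast

lemma diff_self: assumes f: "f \<in> hom A B" shows "f \<ominus> f = zero_arr A B"
  using additive in_homD[OF f] f unfolding is_additive_hom_def by blast

lemma add_commute: assumes f: "f \<in> hom A B" and g: "g \<in> hom A B" shows "f \<oplus> g = g \<oplus> f"
  using additive in_homD[OF f] f g unfolding is_additive_hom_def by blast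

lemma add_assoc:
  assumes f: "f \<in> hom A B" and g: "g \<in> hom A B" and h: "h \<in> hom A B"
  shows "(f \<oplus> g) \<oplus> h = f \<oplus> (g \<oplus> h)"
  using additive in_homD[OF f] f g h unfolding is_additive_hom_def by blast

lemma dag_add: assumes f: "f \<in> hom A B" and g: "g \<in> hom A B" shows "(f \<oplus> g)\<^sup>\<dagger> = f\<^sup>\<dagger> \<oplus> g\<^sup>\<dagger>"
  using additive in_homD[OF f] f g unfolding is_additive_hom_def by blast

lemma comp_add_right:
  assumes f: "f \<in> hom A B" and f': "f' \<in> hom A B" and g: "g \<in> hom B C"
  shows "g \<cdot> (f \<oplus> f') = g \<cdot> f \<oplus> g \<cdot> f'"
  using additive in_homD[OF f] in_homD[OF g] f f' g unfolding is_additive_hom_def by blast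

lemma comp_add_left:
  assumes f: "f \<in> hom A B" and g: "g \<in> hom B C" and g': "g' \<in> hom B C"
  shows "(g \<oplus> g') \<cdot> f = g \<cdot> f \<oplus> g' \<cdot> f"
  using additive in_homD[OF f] in_homD[OF g] f g g' unfolding is_additive_hom_def by blast

lemma zero_add: assumes f: "f \<in> hom A B" shows "zero_arr A B \<oplus> f = f"
  using add_commute[OF zero_in_hom f] add_zero[OF f] in_homD[OF f] by simp

lemma add_left_cancel:
  assumes a: "a \<in> hom A B" and x: "x \<in> hom A B" and y: "y \<in> hom A B" and eq: "a \<oplus> x = a \<oplus> y"
  shows "x = y"
proof -
  have n: "neg_arr a \<in> hom A B" using neg_in_hom[OF a] .
  have "x = (neg_arr a \<oplus> a) \<oplus> x" using add_commute[OF a n] diff_self[OF a] zero_add[OF x] by simp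
  also have "\<dots> = (neg_arr a \<oplus> a) \<oplus> y" using add_assoc[OF n a x] add_assoc[OF n a y] eq by simp
  also have "\<dots> = y" using add_commute[OF a n] diff_self[OF a] zero_add[OF y] by simp
  finally show ?thesis .
qed

lemma neg_unique:
  assumes a: "a \<in> hom A B" and b: "b \<in> hom A B" and eq: "a \<oplus> b = zero_arr A B"
  shows "b = neg_arr a"
  using add_left_cancel[OF a b neg_in_hom[OF a]] eq diff_self[OF a] by simp

lemma zero_unique:
  assumes a: "a \<in> hom A B" and eq: "a \<oplus> a = a" shows "a = zero_arr A B"
  using add_left_cancel[OF a a zero_in_hom] eq add_zero[OF a] in_homD[OF a] by simp

lemma neg_zero:
  assumes "A \<in> dc_Obj X" and "B \<in> dc_Obj X" shows "neg_arr (zero_arr A B) = zero_arr A B"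
  using neg_unique[OF zero_in_hom zero_in_hom] add_zero[OF zero_in_hom] assms by metis

lemma diff_zero: assumes f: "f \<in> hom A B" shows "f \<ominus> zero_arr A B = f"
  using neg_zero add_zero[OF f] in_homD[OF f] by simp

lemma comp_zero: assumes g: "g \<in> hom B C" and A: "A \<in> dc_Obj X" shows "g \<cdot> zero_arr A B = zero_arr A C"
proof -
  have z: "zero_arr A B \<in> hom A B" using zero_in_hom in_homD[OF g] A by blast
  have "g \<cdot> zero_arr A B \<oplus> g \<cdot> zero_arr A B = g \<cdot> zero_arr A B"
    using comp_add_right[OF z z g] add_zero[OF z] by simp
  then show ?thesis using zero_unique[OF comp_in_hom[OF z g]] by simp
qed

lemma zero_comp: assumes f: "f \<in> hom A B" and C: "C \<in> dc_Obj X" shows "zero_arr B C \<cdot> f = zero_arr A C"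
proof -
  have z: "zero_arr B C \<in> hom B C" using zero_in_hom in_homD[OF f] C by blast
  have "zero_arr B C \<cdot> f \<oplus> zero_arr B C \<cdot> f = zero_arr B C \<cdot> f"
    using comp_add_left[OF f z z] add_zero[OF z] by simp
  then show ?thesis using zero_unique[OF comp_in_hom[OF f z]] by simp
qed

lemma comp_neg: assumes f: "f \<in> hom A B" and g: "g \<in> hom B C" shows "g \<cdot> neg_arr f = neg_arr (g \<cdot> f)"
proof -
  have "g \<cdot> f \<oplus> g \<cdot> neg_arr f = zero_arr A C"
    using comp_add_right[OF f neg_in_hom[OF f] g] diff_self[OF f] comp_zero[OF g] in_homD[OF f] by simp
  then show ?thesis using neg_unique[OF comp_in_hom[OF f g] comp_in_hom[OF neg_in_hom[OF f] g]] by simp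
qed

lemma neg_comp: assumes f: "f \<in> hom A B" and g: "g \<in> hom B C" shows "neg_arr g \<cdot> f = neg_arr (g \<cdot> f)"
proof -
  have "g \<cdot> f \<oplus> neg_arr g \<cdot> f = zero_arr A C"
    using comp_add_left[OF f g neg_in_hom[OF g]] diff_self[OF g] zero_comp[OF f] in_homD[OF g] by simp
  then show ?thesis using neg_unique[OF comp_in_hom[OF f g] comp_in_hom[OF f neg_in_hom[OF g]]] by simp
qed

lemma comp_diff_right:
  assumes f: "f \<in> hom A B" and f': "f' \<in> hom A B" and g: "g \<in> hom B C"
  shows "g \<cdot> (f \<ominus> f') = g \<cdot> f \<ominus> g \<cdot> f'"
  using comp_add_right[OF f neg_in_hom[OF f'] g] comp_neg[OF f' g] by simp

lemma comp_diff_left: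
  assumes f: "f \<in> hom A B" and g: "g \<in> hom B C" and g': "g' \<in> hom B C"
  shows "(g \<ominus> g') \<cdot> f = g \<cdot> f \<ominus> g' \<cdot> f"
  using comp_add_left[OF f g neg_in_hom[OF g']] neg_comp[OF f g'] by simp

lemma dag_zero: assumes "A \<in> dc_Obj X" and "B \<in> dc_Obj X" shows "(zero_arr A B)\<^sup>\<dagger> = zero_arr B A"
proof -
  have z: "zero_arr A B \<in> hom A B" using zero_in_hom assms by blast
  have "(zero_arr A B)\<^sup>\<dagger> \<oplus> (zero_arr A B)\<^sup>\<dagger> = (zero_arr A B)\<^sup>\<dagger>" using dag_add[OF z z] add_zero[OF z] by simp
  then show ?thesis using zero_unique[OF dag_in_hom[OF z]] by simp
qed

lemma dag_neg: assumes f: "f \<in> hom A B" shows "(neg_arr f)\<^sup>\<dagger> = neg_arr (f\<^sup>\<dagger>)"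
proof -
  have "f\<^sup>\<dagger> \<oplus> (neg_arr f)\<^sup>\<dagger> = zero_arr B A"
    using dag_add[OF f neg_in_hom[OF f]] diff_self[OF f] dag_zero in_homD[OF f] by simp
  then show ?thesis using neg_unique[OF dag_in_hom[OF f] dag_in_hom[OF neg_in_hom[OF f]]] by simp
qed

lemma dag_diff: assumes f: "f \<in> hom A B" and g: "g \<in> hom A B" shows "(f \<ominus> g)\<^sup>\<dagger> = f\<^sup>\<dagger> \<ominus> g\<^sup>\<dagger>"
  using dag_add[OF f neg_in_hom[OF g]] dag_neg[OF g] by simp

lemma comp_gram:
  assumes \<phi>: "\<phi> \<in> hom S D" and u: "u \<in> hom U S" and v: "v \<in> hom V S"
  shows "u\<^sup>\<dagger> \<cdot> (\<phi>\<^sup>\<dagger> \<cdot> \<phi>) \<cdot> v = (\<phi> \<cdot> u)\<^sup>\<dagger> \<cdot> \<phi> \<cdot> v"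
  using comp_assoc[OF v \<phi> dag_in_hom[OF \<phi>]] comp_assoc[OF comp_in_hom[OF v \<phi>] dag_in_hom[OF \<phi>] dag_in_hom[OF u]]
    dag_comp[OF u \<phi>] by simp

context
  fixes B C
  assumes B: "B \<in> dc_Obj X" and C: "C \<in> dc_Obj X"
begin

abbreviation "\<iota>\<^sub>1 \<equiv> dc_inj1 X B C"
abbreviation "\<iota>\<^sub>2 \<equiv> dc_inj2 X B C"
abbreviation "\<pi>\<^sub>1 \<equiv> dc_prj1 X B C"
abbreviation "\<pi>\<^sub>2 \<equiv> dc_prj2 X B C"

lemma biproduct_in_hom:
  "dc_bip X B C \<in> dc_Obj X" "\<iota>\<^sub>1 \<in> hom B (dc_bip X B C)" "\<iota>\<^sub>2 \<in> hom C (dc_bip X B C)"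
  "\<pi>\<^sub>1 \<in> hom (dc_bip X B C) B" "\<pi>\<^sub>2 \<in> hom (dc_bip X B C) C"
  using biproducts B C unfolding has_dagger_biproducts_def by blast+

lemma prj_inj:
  "\<pi>\<^sub>1 \<cdot> \<iota>\<^sub>1 = dc_id X B" "\<pi>\<^sub>2 \<cdot> \<iota>\<^sub>2 = dc_id X C"
  "\<pi>\<^sub>1 \<cdot> \<iota>\<^sub>2 = zero_arr C B" "\<pi>\<^sub>2 \<cdot> \<iota>\<^sub>1 = zero_arr B C"
  using biproducts B C unfolding has_dagger_biproducts_def by blast+

lemma prj_eq_dag_inj: "\<pi>\<^sub>1 = \<iota>\<^sub>1\<^sup>\<dagger>" "\<pi>\<^sub>2 = \<iota>\<^sub>2\<^sup>\<dagger>"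
  using biproducts B C dag_dag[OF biproduct_in_hom(4)] dag_dag[OF biproduct_in_hom(5)]
  unfolding has_dagger_biproducts_def by metis+

lemma prj_tuple:
  assumes x: "x \<in> hom W B" and y: "y \<in> hom W C"
  shows "\<pi>\<^sub>1 \<cdot> (\<iota>\<^sub>1 \<cdot> x \<oplus> \<iota>\<^sub>2 \<cdot> y) = x" and "\<pi>\<^sub>2 \<cdot> (\<iota>\<^sub>1 \<cdot> x \<oplus> \<iota>\<^sub>2 \<cdot> y) = y"
proof -
  note homs = biproduct_in_hom
  have i1x: "\<iota>\<^sub>1 \<cdot> x \<in> hom W (dc_bip X B C)" using comp_in_hom[OF x homs(2)] .
  have i2y: "\<iota>\<^sub>2 \<cdot> y \<in> hom W (dc_bip X B C)" using comp_in_hom[OF y homs(3)] .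
  have "\<pi>\<^sub>1 \<cdot> (\<iota>\<^sub>1 \<cdot> x \<oplus> \<iota>\<^sub>2 \<cdot> y) = (\<pi>\<^sub>1 \<cdot> \<iota>\<^sub>1) \<cdot> x \<oplus> (\<pi>\<^sub>1 \<cdot> \<iota>\<^sub>2) \<cdot> y"
    using comp_add_right[OF i1x i2y homs(4)] comp_assoc[OF x homs(2,4)] comp_assoc[OF y homs(3,4)] by simp
  also have "\<dots> = x" using prj_inj id_comp[OF x] zero_comp[OF y B] add_zero[OF x] by simp
  finally show "\<pi>\<^sub>1 \<cdot> (\<iota>\<^sub>1 \<cdot> x \<oplus> \<iota>\<^sub>2 \<cdot> y) = x" .
  have "\<pi>\<^sub>2 \<cdot> (\<iota>\<^sub>1 \<cdot> x \<oplus> \<iota>\<^sub>2 \<cdot> y) = (\<pi>\<^sub>2 \<cdot> \<iota>\<^sub>1) \<cdot> x \<oplus> (\<pi>\<^sub>2 \<cdot> \<iota>\<^sub>2) \<cdot> y"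
    using comp_add_right[OF i1x i2y homs(5)] comp_assoc[OF x homs(2,5)] comp_assoc[OF y homs(3,5)] by simp
  also have "\<dots> = y" using prj_inj id_comp[OF y] zero_comp[OF x C] zero_add[OF y] by simp
  finally show "\<pi>\<^sub>2 \<cdot> (\<iota>\<^sub>1 \<cdot> x \<oplus> \<iota>\<^sub>2 \<cdot> y) = y" .
qed

lemma mat2_comp_inj:
  assumes a: "a \<in> hom B B" and b: "b \<in> hom C B" and c: "c \<in> hom B C" and d: "d \<in> hom C C"
  shows "mat2 X B C a b c d \<cdot> \<iota>\<^sub>1 = \<iota>\<^sub>1 \<cdot> a \<oplus> \<iota>\<^sub>2 \<cdot> c"
    and "mat2 X B C a b c d \<cdot> \<iota>\<^sub>2 = \<iota>\<^sub>1 \<cdot> b \<oplus> \<iota>\<^sub>2 \<cdot> d"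
proof -
  note homs = biproduct_in_hom
  let ?S = "dc_bip X B C"
  have t11: "\<iota>\<^sub>1 \<cdot> a \<cdot> \<pi>\<^sub>1 \<in> hom ?S ?S" by (rule comp_in_hom[OF comp_in_hom[OF homs(4) a] homs(2)])
  have t12: "\<iota>\<^sub>1 \<cdot> b \<cdot> \<pi>\<^sub>2 \<in> hom ?S ?S" by (rule comp_in_hom[OF comp_in_hom[OF homs(5) b] homs(2)])
  have t21: "\<iota>\<^sub>2 \<cdot> c \<cdot> \<pi>\<^sub>1 \<in> hom ?S ?S" by (rule comp_in_hom[OF comp_in_hom[OF homs(4) c] homs(3)])
  have t22: "\<iota>\<^sub>2 \<cdot> d \<cdot> \<pi>\<^sub>2 \<in> hom ?S ?S" by (rule comp_in_hom[OF comp_in_hom[OF homs(5) d] homs(3)])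
  have distrib: "mat2 X B C a b c d \<cdot> v =
      (\<iota>\<^sub>1 \<cdot> a \<cdot> \<pi>\<^sub>1 \<cdot> v \<oplus> \<iota>\<^sub>1 \<cdot> b \<cdot> \<pi>\<^sub>2 \<cdot> v) \<oplus> (\<iota>\<^sub>2 \<cdot> c \<cdot> \<pi>\<^sub>1 \<cdot> v \<oplus> \<iota>\<^sub>2 \<cdot> d \<cdot> \<pi>\<^sub>2 \<cdot> v)"
    if v: "v \<in> hom V ?S" for v V
    unfolding mat2_def
    using comp_add_left[OF v add_in_hom[OF t11 t12] add_in_hom[OF t21 t22]]
      comp_add_left[OF v t11 t12] comp_add_left[OF v t21 t22]
      comp_assoc3[OF homs(2) a homs(4) v] comp_assoc3[OF homs(2) b homs(5) v]
      comp_assoc3[OF homs(3) c homs(4) v] comp_assoc3[OF homs(3) d homs(5) v]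
    by simp
  have "mat2 X B C a b c d \<cdot> \<iota>\<^sub>1 = (\<iota>\<^sub>1 \<cdot> a \<oplus> zero_arr B ?S) \<oplus> (\<iota>\<^sub>2 \<cdot> c \<oplus> zero_arr B ?S)"
    using distrib[OF homs(2)] prj_inj comp_id[OF a] comp_id[OF c] comp_zero[OF b B] comp_zero[OF d B]
      comp_zero[OF homs(2) B] comp_zero[OF homs(3) B] by simp
  then show "mat2 X B C a b c d \<cdot> \<iota>\<^sub>1 = \<iota>\<^sub>1 \<cdot> a \<oplus> \<iota>\<^sub>2 \<cdot> c"
    using add_zero[OF comp_in_hom[OF a homs(2)]] add_zero[OF comp_in_hom[OF c homs(3)]] by simp
  have "mat2 X B C a b c d \<cdot> \<iota>\<^sub>2 = (zero_arr C ?S \<oplus> \<iota>\<^sub>1 \<cdot> b) \<oplus> (zero_arr C ?S \<oplus> \<iota>\<^sub>2 \<cdot> d)"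
    using distrib[OF homs(3)] prj_inj comp_id[OF b] comp_id[OF d] comp_zero[OF a C] comp_zero[OF c C]
      comp_zero[OF homs(2) C] comp_zero[OF homs(3) C] by simp
  then show "mat2 X B C a b c d \<cdot> \<iota>\<^sub>2 = \<iota>\<^sub>1 \<cdot> b \<oplus> \<iota>\<^sub>2 \<cdot> d"
    using zero_add[OF comp_in_hom[OF b homs(2)]] zero_add[OF comp_in_hom[OF d homs(3)]] by simp
qed

lemma mat2_entries:
  assumes "a \<in> hom B B" and "b \<in> hom C B" and "c \<in> hom B C" and "d \<in> hom C C"
  shows "\<pi>\<^sub>1 \<cdot> mat2 X B C a b c d \<cdot> \<iota>\<^sub>1 = a" and "\<pi>\<^sub>1 \<cdot> mat2 X B C a b c d \<cdot> \<iota>\<^sub>2 = b"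
    and "\<pi>\<^sub>2 \<cdot> mat2 X B C a b c d \<cdot> \<iota>\<^sub>1 = c" and "\<pi>\<^sub>2 \<cdot> mat2 X B C a b c d \<cdot> \<iota>\<^sub>2 = d"
  using mat2_comp_inj[OF assms] prj_tuple[of a _ c] prj_tuple[of b _ d] assms by simp_all

lemma mat2_gram_entries:
  assumes a: "a \<in> hom B B" and b: "b \<in> hom C B" and c: "c \<in> hom B C" and d: "d \<in> hom C C"
    and \<phi>: "\<phi> \<in> hom (dc_bip X B C) D"
    and gram: "mat2 X B C a b c d = \<phi>\<^sup>\<dagger> \<cdot> \<phi>"
  shows "a = (\<phi> \<cdot> \<iota>\<^sub>1)\<^sup>\<dagger> \<cdot> \<phi> \<cdot> \<iota>\<^sub>1" and "b = (\<phi> \<cdot> \<iota>\<^sub>1)\<^sup>\<dagger> \<cdot> \<phi> \<cdot> \<iota>\<^sub>2"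
    and "d = (\<phi> \<cdot> \<iota>\<^sub>2)\<^sup>\<dagger> \<cdot> \<phi> \<cdot> \<iota>\<^sub>2"
proof -
  note entries = mat2_entries[OF a b c d, unfolded gram prj_eq_dag_inj]
  note homs = biproduct_in_hom
  show "a = (\<phi> \<cdot> \<iota>\<^sub>1)\<^sup>\<dagger> \<cdot> \<phi> \<cdot> \<iota>\<^sub>1"
    using entries(1) comp_gram[OF \<phi> homs(2) homs(2)] by simp
  show "b = (\<phi> \<cdot> \<iota>\<^sub>1)\<^sup>\<dagger> \<cdot> \<phi> \<cdot> \<iota>\<^sub>2"
    using entries(2) comp_gram[OF \<phi> homs(2) homs(3)] by simp
  show "d = (\<phi> \<cdot> \<iota>\<^sub>2)\<^sup>\<dagger> \<cdot> \<phi> \<cdot> \<iota>\<^sub>2"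
    using entries(4) comp_gram[OF \<phi> homs(3) homs(3)] by simp
qed

end

lemma mp_inverse_in_hom: "f \<in> hom A B \<Longrightarrow> mp_inverse X f g \<Longrightarrow> g \<in> hom B A"
  unfolding mp_inverse_def dc_hom_def by auto

lemma dagger_idempotent_complement:
  assumes P: "P \<in> hom D D" and P_sa: "P\<^sup>\<dagger> = P" and P_idem: "P \<cdot> P = P" and g: "g \<in> hom C D"
  shows "(g \<ominus> P \<cdot> g)\<^sup>\<dagger> \<cdot> (g \<ominus> P \<cdot> g) = g\<^sup>\<dagger> \<cdot> g \<ominus> g\<^sup>\<dagger> \<cdot> P \<cdot> g"
proof -
  have Pg: "P \<cdot> g \<in> hom C D" using comp_in_hom[OF g P] .
  have gd: "g\<^sup>\<dagger> \<in> hom D C" using dag_in_hom[OF g] .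
  have gdP: "g\<^sup>\<dagger> \<cdot> P \<in> hom D C" using comp_in_hom[OF P gd] .
  have psi_dag: "(g \<ominus> P \<cdot> g)\<^sup>\<dagger> = g\<^sup>\<dagger> \<ominus> g\<^sup>\<dagger> \<cdot> P"
    using dag_diff[OF g Pg] dag_comp[OF g P] P_sa by simp
  have "(g\<^sup>\<dagger> \<ominus> g\<^sup>\<dagger> \<cdot> P) \<cdot> g = g\<^sup>\<dagger> \<cdot> g \<ominus> g\<^sup>\<dagger> \<cdot> P \<cdot> g"
    using comp_diff_left[OF g gd gdP] comp_assoc[OF g P gd] by simp
  moreover have "(g\<^sup>\<dagger> \<ominus> g\<^sup>\<dagger> \<cdot> P) \<cdot> P \<cdot> g = zero_arr C C"
    using comp_diff_left[OF Pg gd gdP] comp_assoc[OF Pg P gd] comp_assoc[OF g P P] P_idem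
      diff_self[OF comp_in_hom[OF Pg gd]] by simp
  ultimately have "(g\<^sup>\<dagger> \<ominus> g\<^sup>\<dagger> \<cdot> P) \<cdot> (g \<ominus> P \<cdot> g) = g\<^sup>\<dagger> \<cdot> g \<ominus> g\<^sup>\<dagger> \<cdot> P \<cdot> g \<ominus> zero_arr C C"
    using comp_diff_right[OF g Pg diff_in_hom[OF gd gdP]] by simp
  then show ?thesis
    using psi_dag diff_zero[OF diff_in_hom[OF comp_in_hom[OF g gd] comp_in_hom[OF Pg gd]]] by simp
qed

lemma gram_mp_inverse:
  assumes f: "f \<in> hom B D" and f_mp: "mp_inverse X f f'" and \<alpha>_mp: "mp_inverse X (f\<^sup>\<dagger> \<cdot> f) \<alpha>'"
  shows "f \<cdot> \<alpha>' \<cdot> f\<^sup>\<dagger> \<cdot> f = f" and "f \<cdot> \<alpha>' \<cdot> f\<^sup>\<dagger> = f \<cdot> f'"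
proof -
  define \<alpha> where "\<alpha> = f\<^sup>\<dagger> \<cdot> f"
  have fd: "f\<^sup>\<dagger> \<in> hom D B" using dag_in_hom[OF f] .
  have \<alpha>: "\<alpha> \<in> hom B B" unfolding \<alpha>_def using comp_in_hom[OF f fd] .
  have f': "f' \<in> hom D B" using mp_inverse_in_hom[OF f f_mp] .
  have \<alpha>': "\<alpha>' \<in> hom B B" using mp_inverse_in_hom[OF \<alpha> \<alpha>_mp[folded \<alpha>_def]] .
  have \<alpha>_sa: "\<alpha>\<^sup>\<dagger> = \<alpha>" unfolding \<alpha>_def using dag_comp[OF f fd] dag_dag[OF f] by simp
  have f_eq: "f = f'\<^sup>\<dagger> \<cdot> \<alpha>"
  proof -
    have "f = (f \<cdot> f') \<cdot> f" using f_mp comp_assoc[OF f f' f] unfolding mp_inverse_def by simp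
    also have "\<dots> = (f'\<^sup>\<dagger> \<cdot> f\<^sup>\<dagger>) \<cdot> f" using f_mp dag_comp[OF f' f] unfolding mp_inverse_def by simp
    also have "\<dots> = f'\<^sup>\<dagger> \<cdot> \<alpha>" unfolding \<alpha>_def using comp_assoc[OF f fd dag_in_hom[OF f']] by simp
    finally show ?thesis .
  qed
  have fd_eq: "f\<^sup>\<dagger> = \<alpha> \<cdot> f'"
    using arg_cong[OF f_eq, of dag] dag_comp[OF \<alpha> dag_in_hom[OF f']] dag_dag[OF f'] \<alpha>_sa by simp
  have "f \<cdot> \<alpha>' \<cdot> \<alpha> = f'\<^sup>\<dagger> \<cdot> \<alpha> \<cdot> \<alpha>' \<cdot> \<alpha>"
    using f_eq comp_assoc[OF comp_in_hom[OF \<alpha> \<alpha>'] \<alpha> dag_in_hom[OF f']] by metis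
  also have "\<dots> = f" using \<alpha>_mp f_eq unfolding mp_inverse_def \<alpha>_def by simp
  finally show first: "f \<cdot> \<alpha>' \<cdot> f\<^sup>\<dagger> \<cdot> f = f" unfolding \<alpha>_def .
  have "f \<cdot> \<alpha>' \<cdot> f\<^sup>\<dagger> = (f \<cdot> \<alpha>' \<cdot> \<alpha>) \<cdot> f'"
    unfolding fd_eq using comp_assoc[OF f' \<alpha> \<alpha>'] comp_assoc[OF f' comp_in_hom[OF \<alpha> \<alpha>'] f] by simp
  then show "f \<cdot> \<alpha>' \<cdot> f\<^sup>\<dagger> = f \<cdot> f'" using first unfolding \<alpha>_def by simp
qed

lemma conditional_generator_gram:
  assumes f: "f \<in> hom B D" and g: "g \<in> hom C D"
    and f_mp: "mp_inverse X f f'" and \<alpha>_mp: "mp_inverse X (f\<^sup>\<dagger> \<cdot> f) \<alpha>'"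
  shows "conditional_generator X B C (f\<^sup>\<dagger> \<cdot> f) (f\<^sup>\<dagger> \<cdot> g) (g\<^sup>\<dagger> \<cdot> g) ((f\<^sup>\<dagger> \<cdot> g)\<^sup>\<dagger> \<cdot> \<alpha>')"
proof -
  let ?P = "f \<cdot> f'"
  have fd: "f\<^sup>\<dagger> \<in> hom D B" and gd: "g\<^sup>\<dagger> \<in> hom D C" using dag_in_hom f g by blast+
  have f': "f' \<in> hom D B" using mp_inverse_in_hom[OF f f_mp] .
  have \<alpha>': "\<alpha>' \<in> hom B B" using mp_inverse_in_hom[OF comp_in_hom[OF f fd] \<alpha>_mp] .
  have P: "?P \<in> hom D D" using comp_in_hom[OF f' f] .
  have m_eq: "(f\<^sup>\<dagger> \<cdot> g)\<^sup>\<dagger> \<cdot> \<alpha>' = g\<^sup>\<dagger> \<cdot> f \<cdot> \<alpha>'"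
    using dag_comp[OF g fd] dag_dag[OF f] comp_assoc[OF \<alpha>' f gd] by simp
  have m: "g\<^sup>\<dagger> \<cdot> f \<cdot> \<alpha>' \<in> hom B C" using comp_in_hom[OF comp_in_hom[OF \<alpha>' f] gd] .
  have "(g\<^sup>\<dagger> \<cdot> f \<cdot> \<alpha>') \<cdot> f\<^sup>\<dagger> \<cdot> f = g\<^sup>\<dagger> \<cdot> f \<cdot> \<alpha>' \<cdot> f\<^sup>\<dagger> \<cdot> f"
    using comp_assoc3[OF gd f \<alpha>' comp_in_hom[OF f fd]] .
  also have "\<dots> = (f\<^sup>\<dagger> \<cdot> g)\<^sup>\<dagger>" using gram_mp_inverse(1)[OF f f_mp \<alpha>_mp] dag_comp[OF g fd] dag_dag[OF f] by simp
  finally have generator: "(g\<^sup>\<dagger> \<cdot> f \<cdot> \<alpha>') \<cdot> f\<^sup>\<dagger> \<cdot> f = (f\<^sup>\<dagger> \<cdot> g)\<^sup>\<dagger>" .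
  have "(g\<^sup>\<dagger> \<cdot> f \<cdot> \<alpha>') \<cdot> f\<^sup>\<dagger> \<cdot> g = g\<^sup>\<dagger> \<cdot> (f \<cdot> \<alpha>' \<cdot> f\<^sup>\<dagger>) \<cdot> g"
    using comp_assoc3[OF gd f \<alpha>' comp_in_hom[OF g fd]] comp_assoc[OF g fd \<alpha>']
      comp_assoc[OF g comp_in_hom[OF fd \<alpha>'] f] by simp
  also have "\<dots> = g\<^sup>\<dagger> \<cdot> ?P \<cdot> g" using gram_mp_inverse(2)[OF f f_mp \<alpha>_mp] by simp
  finally have m_\<beta>: "(g\<^sup>\<dagger> \<cdot> f \<cdot> \<alpha>') \<cdot> f\<^sup>\<dagger> \<cdot> g = g\<^sup>\<dagger> \<cdot> ?P \<cdot> g" .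
  have P_sa: "?P\<^sup>\<dagger> = ?P" and P_idem: "?P \<cdot> ?P = ?P"
    using f_mp comp_assoc[OF P f' f] unfolding mp_inverse_def by simp_all
  have "g\<^sup>\<dagger> \<cdot> g \<ominus> (g\<^sup>\<dagger> \<cdot> f \<cdot> \<alpha>') \<cdot> f\<^sup>\<dagger> \<cdot> g = (g \<ominus> ?P \<cdot> g)\<^sup>\<dagger> \<cdot> (g \<ominus> ?P \<cdot> g)"
    using dagger_idempotent_complement[OF P P_sa P_idem g] m_\<beta> by simp
  then have "dagger_positive X C (g\<^sup>\<dagger> \<cdot> g \<ominus> (g\<^sup>\<dagger> \<cdot> f \<cdot> \<alpha>') \<cdot> f\<^sup>\<dagger> \<cdot> g)"
    unfolding dagger_positive_def using in_homD(2)[OF g] diff_in_hom[OF g comp_in_hom[OF g P]] by blast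
  then show ?thesis unfolding conditional_generator_def m_eq using m generator by blast
qed

end

theorem mainTheorem10:
  fixes X :: "('o, 'm, 'z) dac_scheme"
  assumes "mp_dagger_additive_category X"
    and "B \<in> dc_Obj X" and "C \<in> dc_Obj X"
    and "\<alpha> \<in> dc_hom X B B" and "\<beta> \<in> dc_hom X C B" and "\<delta> \<in> dc_hom X C C"
    and "dagger_positive X (dc_bip X B C) (mat2 X B C \<alpha> \<beta> (dc_dag X \<beta>) \<delta>)"
    and "mp_inverse X \<alpha> \<alpha>o"
  shows "conditional_generator X B C \<alpha> \<beta> \<delta> (dc_cmp X (dc_dag X \<beta>) \<alpha>o)"
proof -
  interpret dagger_additive X
    using assms(1) unfolding mp_dagger_additive_category_def by unfold_locales blast
  obtain D \<phi> where \<phi>: "\<phi> \<in> hom (dc_bip X B C) D"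
    and gram: "mat2 X B C \<alpha> \<beta> \<beta>\<^sup>\<dagger> \<delta> = \<phi>\<^sup>\<dagger> \<cdot> \<phi>"
    using assms(7) unfolding dagger_positive_def by blast
  define f where "f = \<phi> \<cdot> dc_inj1 X B C"
  define g where "g = \<phi> \<cdot> dc_inj2 X B C"
  have f: "f \<in> hom B D" and g: "g \<in> hom C D"
    unfolding f_def g_def using biproduct_in_hom[OF assms(2,3)] comp_in_hom \<phi> by blast+
  have entries: "\<alpha> = f\<^sup>\<dagger> \<cdot> f" "\<beta> = f\<^sup>\<dagger> \<cdot> g" "\<delta> = g\<^sup>\<dagger> \<cdot> g"
    using mat2_gram_entries[OF assms(2-5) dag_in_hom[OF assms(5)] assms(6) \<phi> gram]
    unfolding f_def g_def by simp_all
  obtain f' where "mp_inverse X f f'"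
    using assms(1) in_homD(3)[OF f] unfolding mp_dagger_additive_category_def by blast
  then show ?thesis using conditional_generator_gram[OF f g] assms(8) unfolding entries by blast
qed

end
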